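(* Let $A\in\mathbb{R}^{n\times n}$, $B\in\mathbb{R}^{n\times m}$ be (unknown) matrices, and consider the discrete-time linear system $x^+=Ax+Bu$ with state set $X\subset\mathbb{R}^n$, initial set $X_{\mathcal I}\subset X$ and unsafe set $X_{\mathcal U}\subset X$. Let $\mathcal{U}_0=[u(0),\dots,u(T-1)]\in\mathbb{R}^{m\times T}$, $\mathcal{X}_0=[x(0),\dots,x(T-1)]\in\mathbb{R}^{n\times T}$, $\mathcal{X}_1=[x(1),\dots,x(T)]\in\mathbb{R}^{n\times T}$ be data from a single trajectory, i.e. $x(t+1)=Ax(t)+Bu(t)$, with $\mathcal{X}_0$ of full row rank, and let $Q\in\mathbb{R}^{T\times n}$ satisfy $\mathcal{X}_0Q=\mathbb{I}_n$. Suppose there exist a symmetric positive-definite matrix $P\in\mathbb{R}^{n\times n}$, $k\in\mathbb{N}_{>0}$ and $\gamma,\lambda,\epsilon\in\mathbb{R}_{\ge0}$ with $\lambda>\gamma+(k-1)\epsilon$ such that (i) $x^\top Px\le\gamma$ for all $x\in X_{\mathcal I}$; (ii) $x^\top Px\ge\lambda$ for all $x\in X_{\mathcal U}$; (iii) $x^\top Q^\top\mathcal{X}_1^\top P\mathcal{X}_1Qx\le x^\top Px+\epsilon$ for all $x\in X$; (iv) $((\mathcal{X}_1Q)^k)^\top P(\mathcal{X}_1Q)^k\preceq P$. Then $\mathcal{B}(x)=x^\top Px$ is a $k$-inductive control barrier certificate for the system and $u=\mathcal{U}_0Qx$ is a corresponding safety controller; that is, $\mathcal{B}(x)\le\gamma$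 on $X_{\mathcal I}$, $\mathcal{B}(x)\ge\lambda$ on $X_{\mathcal U}$, and, for every $x\in X$, with $x^+=Ax+B\,\mathcal{U}_0Qx$ and $x^{k+}$ the state after $k$ steps of this closed loop, $\mathcal{B}(x^+)\le\mathcal{B}(x)+\epsilon$ and $\mathcal{B}(x^{k+})\le\mathcal{B}(x)$.
   Context: $\mathbb{I}_n$ is the $n\times n$ identity; $\preceq$ is the Loewner order on symmetric matrices. A function $\mathcal{B}:X\to\mathbb{R}_{\ge0}$ is a $k$-inductive control barrier certificate ($k$-CBC) if there are $k\in\mathbb{N}_{>0}$ and $\gamma,\lambda,\epsilon\ge0$ with $\lambda>\gamma+(k-1)\epsilon$ such that $\mathcal{B}\le\gamma$ on $X_{\mathcal I}$, $\mathcal{B}\ge\lambda$ on $X_{\mathcal U}$, and for all $x\in X$ there is an input with $\mathcal{B}(x^+)\le\mathcal{B}(x)+\epsilon$ and $\mathcal{B}(x^{k+})\le\mathcal{B}(x)$, where $x^{k+}$ is the state after $k$ steps of the dynamics; a feedback realizing these inequalities is called a safety controller. *)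

theory Defs
  imports "HOL-Analysis.Analysis"
begin

primrec mat_pow :: "real^'n^'n \<Rightarrow> nat \<Rightarrow> real^'n^'n" where
  "mat_pow M 0 = mat 1"
| "mat_pow M (Suc k) = M ** mat_pow M k"

definition loewner_le :: "real^'n^'n \<Rightarrow> real^'n^'n \<Rightarrow> bool" where
  "loewner_le M N \<longleftrightarrow> (\<forall>x. x \<bullet> (M *v x) \<le> x \<bullet> (N *v x))"

definition pos_def_sym :: "real^'n^'n \<Rightarrow> bool" where
  "pos_def_sym P \<longleftrightarrow> transpose P = P \<and> (\<forall>x. x \<noteq> 0 \<longrightarrow> x \<bullet> (P *v x) > 0)"

definition quad :: "real^'n^'n \<Rightarrow> real^'n \<Rightarrow> real" where
  "quad P x = x \<bullet> (P *v x)"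

definition kCBC_with_controller ::
  "('x \<Rightarrow> 'u \<Rightarrow> 'x) \<Rightarrow> 'x set \<Rightarrow> 'x set \<Rightarrow> 'x set \<Rightarrow> ('x \<Rightarrow> real) \<Rightarrow> ('x \<Rightarrow> 'u)
    \<Rightarrow> nat \<Rightarrow> real \<Rightarrow> real \<Rightarrow> real \<Rightarrow> bool" where
  "kCBC_with_controller f X XI XU Bc ctrl k gam lam eps \<longleftrightarrow>
     (\<forall>x\<in>X. Bc x \<ge> 0) \<and>
     k > 0 \<and> gam \<ge> 0 \<and> lam \<ge> 0 \<and> eps \<ge> 0 \<and> lam > gam + (real k - 1) * eps \<and>
     (\<forall>x\<in>XI. Bc x \<le> gam) \<and> (\<forall>x\<in>XU. Bc x \<ge> lam) \<and>
     (\<forall>x\<in>X. Bc (f x (ctrl x)) \<le> Bc x + eps \<and>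
             Bc (((\<lambda>y. f y (ctrl y)) ^^ k) x) \<le> Bc x)"

end

theory Submission
  imports Defs
begin

text \<open>The data identity \<open>X1 = A X0 + B U0\<close> and a right inverse \<open>Q\<close> of \<open>X0\<close> turn the closed loop under
  \<open>u = U0 Q x\<close> into the known linear map \<open>x \<mapsto> X1 Q x\<close>. Conditions (iii) and (iv) are then exactly
  the one-step and \<open>k\<close>-step barrier inequalities for \<open>x\<^sup>T P x\<close> along that map.\<close>

lemma quad_nonneg:
  assumes "pos_def_sym P"
  shows "0 \<le> quad P z"
  using assms unfolding pos_def_sym_def quad_def
  by (cases "z = 0") (auto intro: less_imp_le)

lemma quad_matrix_vector_mult:
  "quad P ((N::real^'n^'m) *v z) = quad (transpose N ** P ** N) z"
  unfolding quad_def
  by (metis dot_lmul_matrix vector_transpose_matrix matrix_vector_mul_assoc)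

lemma funpow_matrix_vector_mult:
  "((\<lambda>y. (M::real^'n^'n) *v y) ^^ k) z = mat_pow M k *v z"
  by (induction k) (simp_all add: matrix_vector_mul_assoc)

lemma data_matrix_one_step:
  fixes A :: "real^'n^'n" and B :: "real^'m^'n" and tau :: "'t::finite \<Rightarrow> nat"
  assumes "\<And>j. x (Suc (tau j)) = A *v x (tau j) + B *v u (tau j)"
  shows "(\<chi> i j. x (Suc (tau j)) $ i) = A ** (\<chi> i j. x (tau j) $ i) + B ** (\<chi> i j. u (tau j) $ i)"
  by (simp add: vec_eq_iff matrix_matrix_mult_def matrix_vector_mult_def assms)

lemma closed_loop_data_representation:
  fixes A :: "real^'n^'n" and B :: "real^'m^'n" and Q :: "real^'n^'t"
  assumes "X1 = A ** X0 + B ** U0" and "X0 ** Q = mat 1"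
  shows "A *v z + B *v ((U0 ** Q) *v z) = (X1 ** Q) *v z"
proof -
  have "X1 *v w = A *v (X0 *v w) + B *v (U0 *v w)" for w
    by (simp add: assms(1) matrix_vector_mult_add_rdistrib matrix_vector_mul_assoc)
  then have "(X1 ** Q) *v z = A *v ((X0 ** Q) *v z) + B *v ((U0 ** Q) *v z)"
    by (simp flip: matrix_vector_mul_assoc)
  then show ?thesis
    by (simp add: assms(2))
qed

theorem theorem2:
  fixes A :: "real^'n^'n" and B :: "real^'m^'n"
    and X XI XU :: "(real^'n) set"
    and x :: "nat \<Rightarrow> real^'n" and u :: "nat \<Rightarrow> real^'m"
    and tau :: "'t::finite \<Rightarrow> nat"
    and U0 :: "real^'t^'m" and X0 X1 :: "real^'t^'n"
    and Q :: "real^'n^'t" and P :: "real^'n^'n"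
    and k :: nat and gam lam eps :: real
  assumes XI_sub: "XI \<subseteq> X" and XU_sub: "XU \<subseteq> X"
    and tau_bij: "bij_betw tau UNIV {..<CARD('t)}"
    and traj: "\<And>t. t < CARD('t) \<Longrightarrow> x (Suc t) = A *v x t + B *v u t"
    and U0_def: "U0 = (\<chi> i j. u (tau j) $ i)"
    and X0_def: "X0 = (\<chi> i j. x (tau j) $ i)"
    and X1_def: "X1 = (\<chi> i j. x (Suc (tau j)) $ i)"
    and full_rank: "rank X0 = CARD('n)"
    and Q_inv: "X0 ** Q = mat 1"
    and P_pd: "pos_def_sym P"
    and k_pos: "k > 0" and gam_nn: "gam \<ge> 0" and lam_nn: "lam \<ge> 0" and eps_nn: "eps \<ge> 0"
    and lam_gt: "lam > gam + (real k - 1) * eps"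
    and c1: "\<forall>z\<in>XI. z \<bullet> (P *v z) \<le> gam"
    and c2: "\<forall>z\<in>XU. z \<bullet> (P *v z) \<ge> lam"
    and c3: "\<forall>z\<in>X. z \<bullet> ((transpose Q ** transpose X1 ** P ** X1 ** Q) *v z) \<le> z \<bullet> (P *v z) + eps"
    and c4: "loewner_le (transpose (mat_pow (X1 ** Q) k) ** P ** mat_pow (X1 ** Q) k) P"
  shows "kCBC_with_controller (\<lambda>z v. A *v z + B *v v) X XI XU (quad P) (\<lambda>z. (U0 ** Q) *v z)
           k gam lam eps"
proof -
  define M where "M = X1 ** Q"
  have "X1 = A ** X0 + B ** U0"
    unfolding X1_def X0_def U0_def
    using tau_bij traj by (intro data_matrix_one_step) (auto simp: bij_betw_def)
  then have closed_loop: "A *v z + B *v ((U0 ** Q) *v z) = M *v z" for z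
    unfolding M_def using Q_inv by (rule closed_loop_data_representation)
  have one_step: "quad P (M *v z) \<le> quad P z + eps" if "z \<in> X" for z
  proof -
    have "quad P (M *v z) = quad (transpose Q ** transpose X1 ** P ** X1 ** Q) z"
      unfolding quad_matrix_vector_mult M_def by (simp add: matrix_transpose_mul matrix_mul_assoc)
    then show ?thesis
      using c3 that by (simp add: quad_def)
  qed
  have k_step: "quad P (mat_pow M k *v z) \<le> quad P z" for z
  proof -
    have "quad (transpose (mat_pow M k) ** P ** mat_pow M k) z \<le> quad P z"
      using c4 unfolding loewner_le_def quad_def M_def by blast
    then show ?thesis
      by (simp only: quad_matrix_vector_mult)
  qed
  show ?thesis
    unfolding kCBC_with_controller_def closed_loop funpow_matrix_vector_mult
    using quad_nonneg[OF P_pd] one_step k_step k_pos gam_nn lam_nn eps_nn lam_gt c1 c2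
    by (simp add: quad_def)
qed

end
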